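(* Let $X=\{0,1\}$ with the graph $0-1$ (arrows $0\to1$ and $1\to0$), $A=\mathbb{F}_2(X)$, and take $\Omega^2=\Omega^1\otimes_A\Omega^1$ (no relations, $\wedge$ the identity map). Then there is a unique bimodule connection on $\Omega^1$ with invertible generalised braiding $\sigma$, namely $\nabla(01)=\nabla(10)=g$, $\sigma=\mathrm{id}$. This is also the unique metric compatible bimodule connection, and it has $T_\nabla=0$ (so it is a QLC) and $R_\nabla=0$.
   Context: Notation: $ij$ denotes the arrow $i\to j$ and $i_0i_1\cdots i_m$ the path $i_0\to i_1\to\cdots\to i_m$; $\Omega^1$ is the $\mathbb{F}_2$-vector space with basis the arrows, with bimodule structure $f\cdot(x\to y)\cdot h=f(x)h(y)\,(x\to y)$ and ${\rm d} f=\sum_{x\to y}(f(y)+f(x))\,x\to y$. Tensor powers $\Omega^1\otimes_A\cdots\otimes_A\Omega^1$ have basis the paths of the corresponding length, a path corresponding to the tensor product of its steps (tensor products of non-composable steps are zero). Let $\theta=01+10$; the differential on 1-forms is ${\rm d}\omega=\theta\otimes\omega+\omega\otimes\theta$. The quantum metric is $g=010+101$. A bimodule connection is a linear map $\nabla:\Omega^1\to\Omega^1\otimes_A\Omega^1$ with $\nabla(f\omega)={\rm d} f\otimes\omega+f\nabla\omega$ and $\nabla(\omega f)=(\nabla\omega)f+\sigma(\omega\otimes{\rm d} f)$ for some bimodule map $\sigma:\Omega^1\otimes_A\Omega^1\to\Omega^1\otimes_A\Omega^1$. It is metric compatible if $(\nabla\otimes\mathrm{id}+(\sigma\otimes\mathrm{id})(\mathrm{id}\otimes\nabla))g=0$.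 Torsion $T_\nabla=\wedge\nabla-{\rm d}$ and curvature $R_\nabla=({\rm d}\otimes\mathrm{id}-(\wedge\otimes\mathrm{id})(\mathrm{id}\otimes\nabla))\nabla:\Omega^1\to\Omega^2\otimes_A\Omega^1$ (signs irrelevant over $\mathbb{F}_2$). A QLC is a torsion free, metric compatible bimodule connection. *)

theory Defs
  imports Main "HOL-Library.Z2"
begin

text \<open>A differential form of degree n is a function on vertex lists, supported on
  the paths of length n (the basis of the n-fold tensor power of Omega1).\<close>

datatype pt = P0 | P1

definition arr :: "pt \<Rightarrow> pt \<Rightarrow> bool" where
  "arr x y \<longleftrightarrow> x \<noteq> y"

definition is_path :: "nat \<Rightarrow> pt list \<Rightarrow> bool" where
  "is_path n p \<longleftrightarrow> length p = Suc n \<and> (\<forall>i<n. arr (p ! i) (p ! Suc i))"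

type_synonym form = "pt list \<Rightarrow> bit"

definition Omega :: "nat \<Rightarrow> form set" where
  "Omega n = {\<omega>. \<forall>p. \<not> is_path n p \<longrightarrow> \<omega> p = 0}"

definition fadd :: "form \<Rightarrow> form \<Rightarrow> form" where
  "fadd \<omega> \<eta> = (\<lambda>p. \<omega> p + \<eta> p)"

definition fscale :: "bit \<Rightarrow> form \<Rightarrow> form" where
  "fscale c \<omega> = (\<lambda>p. c * \<omega> p)"

definition zero_form :: form where
  "zero_form = (\<lambda>p. 0)"

definition lmult :: "(pt \<Rightarrow> bit) \<Rightarrow> form \<Rightarrow> form" where
  "lmult f \<omega> = (\<lambda>p. f (hd p) * \<omega> p)"

definition rmult :: "form \<Rightarrow> (pt \<Rightarrow> bit) \<Rightarrow> form" where
  "rmult \<omega> h = (\<lambda>p. \<omega> p * h (last p))"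

text \<open>Tensor product over A of an m-form with another form (concatenation of paths).\<close>
definition tens :: "nat \<Rightarrow> form \<Rightarrow> form \<Rightarrow> form" where
  "tens m \<omega> \<eta> = (\<lambda>p. \<omega> (take (Suc m) p) * \<eta> (drop m p))"

definition basis :: "pt list \<Rightarrow> form" where
  "basis q = (\<lambda>p. if p = q then 1 else 0)"

definition paths :: "nat \<Rightarrow> pt list set" where
  "paths n = {p. is_path n p}"

definition d0 :: "(pt \<Rightarrow> bit) \<Rightarrow> form" where
  "d0 f = (\<lambda>p. if is_path 1 p then f (last p) + f (hd p) else 0)"

definition theta :: form where
  "theta = (\<lambda>p. if is_path 1 p then 1 else 0)"

definition d1 :: "form \<Rightarrow> form" where
  "d1 \<omega> = fadd (tens 1 theta \<omega>) (tens 1 \<omega> theta)"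

definition gmet :: form where
  "gmet = (\<lambda>p. if is_path 2 p then 1 else 0)"

definition lin_map :: "form set \<Rightarrow> form set \<Rightarrow> (form \<Rightarrow> form) \<Rightarrow> bool" where
  "lin_map S T F \<longleftrightarrow> (\<forall>x\<in>S. F x \<in> T)
     \<and> (\<forall>x\<in>S. \<forall>y\<in>S. F (fadd x y) = fadd (F x) (F y))
     \<and> (\<forall>c. \<forall>x\<in>S. F (fscale c x) = fscale c (F x))"

definition bimod_map2 :: "(form \<Rightarrow> form) \<Rightarrow> bool" where
  "bimod_map2 \<sigma> \<longleftrightarrow> lin_map (Omega 2) (Omega 2) \<sigma>
     \<and> (\<forall>f. \<forall>\<rho>\<in>Omega 2. \<sigma> (lmult f \<rho>) = lmult f (\<sigma> \<rho>))
     \<and> (\<forall>f. \<forall>\<rho>\<in>Omega 2. \<sigma> (rmult \<rho> f) = rmult (\<sigma> \<rho>) f)"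

definition bimod_conn :: "(form \<Rightarrow> form) \<Rightarrow> (form \<Rightarrow> form) \<Rightarrow> bool" where
  "bimod_conn N \<sigma> \<longleftrightarrow> lin_map (Omega 1) (Omega 2) N \<and> bimod_map2 \<sigma>
     \<and> (\<forall>f. \<forall>\<omega>\<in>Omega 1. N (lmult f \<omega>) = fadd (tens 1 (d0 f) \<omega>) (lmult f (N \<omega>)))
     \<and> (\<forall>f. \<forall>\<omega>\<in>Omega 1. N (rmult \<omega> f) = fadd (rmult (N \<omega>) f) (\<sigma> (tens 1 \<omega> (d0 f))))"

text \<open>(sigma (x) id) on Omega1 (x) Omega1 (x) Omega1, via the path basis.\<close>
definition sigma_id :: "(form \<Rightarrow> form) \<Rightarrow> form \<Rightarrow> form" where
  "sigma_id \<sigma> \<tau> = (\<lambda>r. \<Sum>q\<in>paths 3. \<tau> q * tens 2 (\<sigma> (basis (take 3 q))) (basis (drop 2 q)) r)"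

text \<open>(nabla (x) id + (sigma (x) id)(id (x) nabla)) applied to a 2-form, via the path basis.\<close>
definition nabla2 :: "(form \<Rightarrow> form) \<Rightarrow> (form \<Rightarrow> form) \<Rightarrow> form \<Rightarrow> form" where
  "nabla2 N \<sigma> \<rho> = (\<lambda>r. \<Sum>p\<in>paths 2. \<rho> p *
      (tens 2 (N (basis (take 2 p))) (basis (drop 1 p)) r
       + sigma_id \<sigma> (tens 1 (basis (take 2 p)) (N (basis (drop 1 p)))) r))"

definition metric_compat :: "(form \<Rightarrow> form) \<Rightarrow> (form \<Rightarrow> form) \<Rightarrow> bool" where
  "metric_compat N \<sigma> \<longleftrightarrow> nabla2 N \<sigma> gmet = zero_form"

text \<open>Omega2 = Omega1 (x) Omega1, wedge = identity; torsion T = wedge nabla - d.\<close>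
definition torsion :: "(form \<Rightarrow> form) \<Rightarrow> form \<Rightarrow> form" where
  "torsion N \<omega> = fadd (N \<omega>) (d1 \<omega>)"

text \<open>Curvature R = (d (x) id - (wedge (x) id)(id (x) nabla)) nabla, via the path basis.\<close>
definition curvature :: "(form \<Rightarrow> form) \<Rightarrow> form \<Rightarrow> form" where
  "curvature N \<omega> = (\<lambda>r. \<Sum>p\<in>paths 2. N \<omega> p *
      (tens 2 (d1 (basis (take 2 p))) (basis (drop 1 p)) r
       + tens 1 (basis (take 2 p)) (N (basis (drop 1 p))) r))"

definition nabla0 :: "form \<Rightarrow> form" where
  "nabla0 \<omega> = fscale (\<omega> [P0, P1] + \<omega> [P1, P0]) gmet"

end

theory Submission
  imports Defs
begin

(* Omega 1 and Omega 2 = Omega 1 (x) Omega 1 are two-dimensional over F2, with bases 01, 10 and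
   010, 101.  The left Leibniz rule applied to delta_x * omega and the right one applied to
   omega * delta_x, for the idempotents delta_x of A, force nabla(01) = a 010 + 101,
   nabla(10) = 010 + b 101 and sigma = diag(a, b) for free parameters a, b in F2, and every such
   pair is a bimodule connection.  Invertibility of sigma singles out a = b = 1, and so does metric
   compatibility, which reduces to (1 + a b)(0101 + 1010) = 0; this is nabla = g on both arrows
   with sigma = id. *)

(* Keep F2 arithmetic as field arithmetic instead of xor/and, and keep degree 1 as 1 rather than
   Suc 0 so that the coordinate rules for Omega 1 and tens 1 below fire. *)
declare add_bit_eq_xor [simp del] mult_bit_eq_and [simp del] One_nat_def [simp del]

lemma arr_iff: "arr x y \<longleftrightarrow> (x = P0 \<and> y = P1) \<or> (x = P1 \<and> y = P0)"
  by (cases x; cases y) (auto simp: arr_def)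

lemma is_path_0: "is_path 0 p \<longleftrightarrow> (\<exists>x. p = [x])"
  by (auto simp: is_path_def length_Suc_conv)

lemma is_path_Suc:
  "is_path (Suc n) p \<longleftrightarrow> (\<exists>x y r. p = x # y # r \<and> arr x y \<and> is_path n (y # r))"
  by (cases p rule: remdups_adj.cases) (auto simp: is_path_def All_less_Suc2)

lemma is_path_1_iff: "is_path 1 p \<longleftrightarrow> p = [P0,P1] \<or> p = [P1,P0]"
  by (auto simp: One_nat_def is_path_Suc is_path_0 arr_iff)

lemma is_path_2_iff: "is_path 2 p \<longleftrightarrow> p = [P0,P1,P0] \<or> p = [P1,P0,P1]"
  by (auto simp: numeral_2_eq_2 is_path_Suc is_path_0 arr_iff)

lemma is_path_3_iff: "is_path 3 p \<longleftrightarrow> p = [P0,P1,P0,P1] \<or> p = [P1,P0,P1,P0]"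
  by (auto simp: numeral_3_eq_3 is_path_Suc is_path_0 arr_iff)

lemma drop_1_Cons [simp]: "drop 1 (x # xs) = xs"
  by (simp add: One_nat_def)

lemma paths_2: "paths 2 = {[P0,P1,P0], [P1,P0,P1]}"
  by (auto simp: paths_def is_path_2_iff)

lemma paths_3: "paths 3 = {[P0,P1,P0,P1], [P1,P0,P1,P0]}"
  by (auto simp: paths_def is_path_3_iff)

definition form1 :: "bit \<Rightarrow> bit \<Rightarrow> form" where
  "form1 x y = (\<lambda>p. if p = [P0,P1] then x else if p = [P1,P0] then y else 0)"

definition form2 :: "bit \<Rightarrow> bit \<Rightarrow> form" where
  "form2 x y = (\<lambda>p. if p = [P0,P1,P0] then x else if p = [P1,P0,P1] then y else 0)"

definition form3 :: "bit \<Rightarrow> bit \<Rightarrow> form" where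
  "form3 x y = (\<lambda>p. if p = [P0,P1,P0,P1] then x else if p = [P1,P0,P1,P0] then y else 0)"

lemma form1_apply [simp]: "form1 x y [P0,P1] = x" "form1 x y [P1,P0] = y"
  by (simp_all add: form1_def)

lemma form2_apply [simp]: "form2 x y [P0,P1,P0] = x" "form2 x y [P1,P0,P1] = y"
  by (simp_all add: form2_def)

lemma form3_apply [simp]: "form3 x y [P0,P1,P0,P1] = x" "form3 x y [P1,P0,P1,P0] = y"
  by (simp_all add: form3_def)

lemma form2_eq_iff [simp]: "form2 x y = form2 x' y' \<longleftrightarrow> x = x' \<and> y = y'"
  by (metis form2_apply)

lemma form3_eq_iff [simp]: "form3 x y = form3 x' y' \<longleftrightarrow> x = x' \<and> y = y'"
  by (metis form3_apply)

lemma form1_in_Omega [simp]: "form1 x y \<in> Omega 1"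
  by (auto simp: Omega_def form1_def is_path_1_iff)

lemma form2_in_Omega [simp]: "form2 x y \<in> Omega 2"
  by (auto simp: Omega_def form2_def is_path_2_iff)

lemma Omega_1E:
  assumes "\<omega> \<in> Omega 1"
  obtains x y where "\<omega> = form1 x y"
proof
  show "\<omega> = form1 (\<omega> [P0,P1]) (\<omega> [P1,P0])"
    using assms by (auto simp: Omega_def form1_def is_path_1_iff)
qed

lemma Omega_2E:
  assumes "\<omega> \<in> Omega 2"
  obtains x y where "\<omega> = form2 x y"
proof
  show "\<omega> = form2 (\<omega> [P0,P1,P0]) (\<omega> [P1,P0,P1])"
    using assms by (auto simp: Omega_def form2_def is_path_2_iff)
qed

lemma fadd_form1 [simp]: "fadd (form1 x y) (form1 x' y') = form1 (x + x') (y + y')"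
  by (auto simp: fadd_def form1_def)

lemma fadd_form2 [simp]: "fadd (form2 x y) (form2 x' y') = form2 (x + x') (y + y')"
  by (auto simp: fadd_def form2_def)

lemma fscale_form1 [simp]: "fscale c (form1 x y) = form1 (c * x) (c * y)"
  by (auto simp: fscale_def form1_def)

lemma fscale_form2 [simp]: "fscale c (form2 x y) = form2 (c * x) (c * y)"
  by (auto simp: fscale_def form2_def)

lemma lmult_form1 [simp]: "lmult f (form1 x y) = form1 (f P0 * x) (f P1 * y)"
  by (auto simp: lmult_def form1_def)

lemma lmult_form2 [simp]: "lmult f (form2 x y) = form2 (f P0 * x) (f P1 * y)"
  by (auto simp: lmult_def form2_def)

lemma rmult_form1 [simp]: "rmult (form1 x y) f = form1 (x * f P1) (y * f P0)"
  by (auto simp: rmult_def form1_def)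

lemma rmult_form2 [simp]: "rmult (form2 x y) f = form2 (x * f P0) (y * f P1)"
  by (auto simp: rmult_def form2_def)

lemma tens_form1_form1 [simp]: "tens 1 (form1 x y) (form1 u v) = form2 (x * v) (y * u)"
proof
  fix p
  show "tens 1 (form1 x y) (form1 u v) p = form2 (x * v) (y * u) p"
    by (cases p rule: remdups_adj.cases; cases "tl (tl p)")
      (auto simp: tens_def form1_def form2_def One_nat_def)
qed

lemma tens_form1_form2 [simp]: "tens 1 (form1 x y) (form2 u v) = form3 (x * v) (y * u)"
proof
  fix p
  show "tens 1 (form1 x y) (form2 u v) p = form3 (x * v) (y * u) p"
    by (cases p rule: remdups_adj.cases; cases "tl (tl p)"; cases "tl (tl (tl p))")
      (auto simp: tens_def form1_def form2_def form3_def One_nat_def)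
qed

lemma tens_form2_form1 [simp]: "tens 2 (form2 x y) (form1 u v) = form3 (x * u) (y * v)"
proof
  fix p
  show "tens 2 (form2 x y) (form1 u v) p = form3 (x * u) (y * v) p"
    by (cases p rule: remdups_adj.cases; cases "tl (tl p)"; cases "tl (tl (tl p))")
      (auto simp: tens_def form1_def form2_def form3_def numeral_2_eq_2)
qed

lemma basis_1 [simp]: "basis [P0,P1] = form1 1 0" "basis [P1,P0] = form1 0 1"
  by (auto simp: basis_def form1_def)

lemma basis_2 [simp]: "basis [P0,P1,P0] = form2 1 0" "basis [P1,P0,P1] = form2 0 1"
  by (auto simp: basis_def form2_def)

lemma d0_eq_form1: "d0 f = form1 (f P0 + f P1) (f P0 + f P1)"
  by (auto simp: d0_def form1_def is_path_1_iff add.commute)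

lemma theta_eq_form1: "theta = form1 1 1"
  by (auto simp: theta_def form1_def is_path_1_iff)

lemma gmet_eq_form2: "gmet = form2 1 1"
  by (auto simp: gmet_def form2_def is_path_2_iff)

lemma zero_form_eq_form2: "zero_form = form2 0 0"
  by (auto simp: zero_form_def form2_def)

lemma zero_form_eq_form3: "zero_form = form3 0 0"
  by (auto simp: zero_form_def form3_def)

lemma fadd_in_Omega: "\<omega> \<in> Omega n \<Longrightarrow> \<eta> \<in> Omega n \<Longrightarrow> fadd \<omega> \<eta> \<in> Omega n"
  by (simp add: Omega_def fadd_def)

lemma fscale_in_Omega: "\<omega> \<in> Omega n \<Longrightarrow> fscale c \<omega> \<in> Omega n"
  by (simp add: Omega_def fscale_def)

lemma lin_map_in: "lin_map S T F \<Longrightarrow> x \<in> S \<Longrightarrow> F x \<in> T"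
  by (simp add: lin_map_def)

lemma lin_map_form1:
  assumes "lin_map (Omega 1) T N"
  shows "N (form1 x y) = fadd (fscale x (N (form1 1 0))) (fscale y (N (form1 0 1)))"
proof -
  have "N (form1 x y) = N (fadd (fscale x (form1 1 0)) (fscale y (form1 0 1)))"
    by simp
  also have "\<dots> = fadd (fscale x (N (form1 1 0))) (fscale y (N (form1 0 1)))"
    using assms
    by (simp add: lin_map_def fadd_in_Omega fscale_in_Omega del: fadd_form1 fscale_form1)
  finally show ?thesis .
qed

lemma lin_map_form2:
  assumes "lin_map (Omega 2) T F"
  shows "F (form2 x y) = fadd (fscale x (F (form2 1 0))) (fscale y (F (form2 0 1)))"
proof -
  have "F (form2 x y) = F (fadd (fscale x (form2 1 0)) (fscale y (form2 0 1)))"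
    by simp
  also have "\<dots> = fadd (fscale x (F (form2 1 0))) (fscale y (F (form2 0 1)))"
    using assms
    by (simp add: lin_map_def fadd_in_Omega fscale_in_Omega del: fadd_form2 fscale_form2)
  finally show ?thesis .
qed

definition nabla_ab :: "bit \<Rightarrow> bit \<Rightarrow> form \<Rightarrow> form" where
  "nabla_ab a b \<omega> = form2 (a * \<omega> [P0,P1] + \<omega> [P1,P0]) (\<omega> [P0,P1] + b * \<omega> [P1,P0])"

definition sigma_ab :: "bit \<Rightarrow> bit \<Rightarrow> form \<Rightarrow> form" where
  "sigma_ab a b \<rho> = form2 (a * \<rho> [P0,P1,P0]) (b * \<rho> [P1,P0,P1])"

lemma nabla_ab_form1 [simp]: "nabla_ab a b (form1 x y) = form2 (a * x + y) (x + b * y)"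
  by (simp add: nabla_ab_def)

lemma sigma_ab_form2 [simp]: "sigma_ab a b (form2 x y) = form2 (a * x) (b * y)"
  by (simp add: sigma_ab_def)

lemma sigma_ab_1_1: "\<rho> \<in> Omega 2 \<Longrightarrow> sigma_ab 1 1 \<rho> = \<rho>"
  by (auto elim: Omega_2E)

lemma bimod_conn_nabla_ab: "bimod_conn (nabla_ab a b) (sigma_ab a b)"
  unfolding bimod_conn_def bimod_map2_def lin_map_def
  by (auto elim!: Omega_1E Omega_2E simp: d0_eq_form1 algebra_simps)

lemma bimod_conn_cong:
  assumes "\<forall>\<omega>\<in>Omega 1. N \<omega> = N' \<omega>" and "\<forall>\<rho>\<in>Omega 2. \<sigma> \<rho> = \<sigma>' \<rho>"
  shows "bimod_conn N \<sigma> \<longleftrightarrow> bimod_conn N' \<sigma>'"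
proof -
  have "lmult f \<omega> \<in> Omega n" "rmult \<omega> f \<in> Omega n" if "\<omega> \<in> Omega n" for f \<omega> n
    using that by (auto simp: Omega_def lmult_def rmult_def)
  moreover have "tens 1 \<omega> (d0 f) \<in> Omega 2" if "\<omega> \<in> Omega 1" for f \<omega>
    using that by (auto elim: Omega_1E simp: d0_eq_form1)
  ultimately show ?thesis
    using assms unfolding bimod_conn_def bimod_map2_def lin_map_def Ball_def
    by (simp add: fadd_in_Omega fscale_in_Omega)
qed

lemma bimod_conn_paramsE:
  assumes "bimod_conn N \<sigma>"
  obtains a b where "\<forall>\<omega>\<in>Omega 1. N \<omega> = nabla_ab a b \<omega>"
    and "\<forall>\<rho>\<in>Omega 2. \<sigma> \<rho> = sigma_ab a b \<rho>"
proof -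
  have lin_N: "lin_map (Omega 1) (Omega 2) N" and lin_\<sigma>: "lin_map (Omega 2) (Omega 2) \<sigma>"
    and left: "\<forall>f. \<forall>\<omega>\<in>Omega 1. N (lmult f \<omega>) = fadd (tens 1 (d0 f) \<omega>) (lmult f (N \<omega>))"
    and right: "\<forall>f. \<forall>\<omega>\<in>Omega 1. N (rmult \<omega> f) = fadd (rmult (N \<omega>) f) (\<sigma> (tens 1 \<omega> (d0 f)))"
    using assms by (simp_all add: bimod_conn_def bimod_map2_def)
  obtain a c where N01: "N (form1 1 0) = form2 a c"
    using lin_map_in[OF lin_N form1_in_Omega] by (rule Omega_2E)
  obtain c' b where N10: "N (form1 0 1) = form2 c' b"
    using lin_map_in[OF lin_N form1_in_Omega] by (rule Omega_2E)
  obtain s t where \<sigma>010: "\<sigma> (form2 1 0) = form2 s t"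
    using lin_map_in[OF lin_\<sigma> form2_in_Omega] by (rule Omega_2E)
  obtain s' t' where \<sigma>101: "\<sigma> (form2 0 1) = form2 s' t'"
    using lin_map_in[OF lin_\<sigma> form2_in_Omega] by (rule Omega_2E)
  \<comment> \<open>Leibniz rules for the idempotents of A fix everything except the diagonal entries a, b.\<close>
  let ?\<delta>0 = "\<lambda>x. of_bool (x = P0) :: bit" and ?\<delta>1 = "\<lambda>x. of_bool (x = P1) :: bit"
  have "c = 1"
    using left[rule_format, of "form1 1 0" ?\<delta>0] by (simp add: N01 d0_eq_form1)
  moreover have "c' = 1"
    using left[rule_format, of "form1 0 1" ?\<delta>1] by (simp add: N10 d0_eq_form1)
  moreover have "s = a" "t = 0"
    using right[rule_format, of "form1 1 0" ?\<delta>1] by (simp_all add: N01 \<sigma>010 d0_eq_form1)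
  moreover have "s' = 0" "t' = b"
    using right[rule_format, of "form1 0 1" ?\<delta>0] by (simp_all add: N10 \<sigma>101 d0_eq_form1)
  ultimately have "N (form1 x y) = nabla_ab a b (form1 x y)"
    and "\<sigma> (form2 x y) = sigma_ab a b (form2 x y)" for x y
    using lin_map_form1[OF lin_N] lin_map_form2[OF lin_\<sigma>]
    by (simp_all add: N01 N10 \<sigma>010 \<sigma>101 algebra_simps)
  then show thesis
    by (intro that) (auto elim!: Omega_1E Omega_2E)
qed

lemma bimod_conn_iff_params:
  "bimod_conn N \<sigma> \<longleftrightarrow>
    (\<exists>a b. (\<forall>\<omega>\<in>Omega 1. N \<omega> = nabla_ab a b \<omega>) \<and> (\<forall>\<rho>\<in>Omega 2. \<sigma> \<rho> = sigma_ab a b \<rho>))"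
  by (metis bimod_conn_paramsE bimod_conn_cong bimod_conn_nabla_ab)

lemma bij_betw_sigma_ab_iff: "bij_betw (sigma_ab a b) (Omega 2) (Omega 2) \<longleftrightarrow> a = 1 \<and> b = 1"
proof
  assume "bij_betw (sigma_ab a b) (Omega 2) (Omega 2)"
  then have inj: "inj_on (sigma_ab a b) (Omega 2)"
    by (rule bij_betw_imp_inj_on)
  have "a = 1"
    using inj_onD[OF inj, of "form2 1 0" "form2 0 0"] by (cases a) auto
  moreover have "b = 1"
    using inj_onD[OF inj, of "form2 0 1" "form2 0 0"] by (cases b) auto
  ultimately show "a = 1 \<and> b = 1" ..
next
  assume "a = 1 \<and> b = 1"
  then have "\<forall>\<rho>\<in>Omega 2. sigma_ab a b \<rho> = id \<rho>"
    by (simp add: sigma_ab_1_1)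
  then show "bij_betw (sigma_ab a b) (Omega 2) (Omega 2)"
    using bij_betw_cong[of "Omega 2" "sigma_ab a b" id] by simp
qed

lemma sigma_id_sigma_ab: "sigma_id (sigma_ab a b) (form3 x y) = form3 (a * x) (b * y)"
  by (auto simp: sigma_id_def paths_3 form3_def)

lemma nabla2_nabla_ab_gmet: "nabla2 (nabla_ab a b) (sigma_ab a b) gmet = form3 (1 + a * b) (1 + a * b)"
  by (simp add: nabla2_def paths_2 gmet_eq_form2 sigma_id_sigma_ab)
    (auto simp: form3_def algebra_simps)

lemma metric_compat_cong:
  assumes "\<forall>\<omega>\<in>Omega 1. N \<omega> = N' \<omega>" and "\<forall>\<rho>\<in>Omega 2. \<sigma> \<rho> = \<sigma>' \<rho>"
  shows "metric_compat N \<sigma> \<longleftrightarrow> metric_compat N' \<sigma>'"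
  using assms by (simp add: metric_compat_def nabla2_def sigma_id_def paths_2 paths_3)

lemma metric_compat_nabla_ab_iff: "metric_compat (nabla_ab a b) (sigma_ab a b) \<longleftrightarrow> a = 1 \<and> b = 1"
  by (cases a; cases b) (simp_all add: metric_compat_def nabla2_nabla_ab_gmet zero_form_eq_form3)

lemma nabla0_eq_nabla_ab: "nabla0 = nabla_ab 1 1"
  by (auto simp: nabla0_def nabla_ab_def gmet_eq_form2 algebra_simps)

lemma nabla_ab_eq_nabla0_iff: "(\<forall>\<omega>\<in>Omega 1. nabla_ab a b \<omega> = nabla0 \<omega>) \<longleftrightarrow> a = 1 \<and> b = 1"
proof
  assume "\<forall>\<omega>\<in>Omega 1. nabla_ab a b \<omega> = nabla0 \<omega>"
  from this[rule_format, of "form1 1 0"] this[rule_format, of "form1 0 1"]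
  show "a = 1 \<and> b = 1"
    by (simp add: nabla0_eq_nabla_ab)
qed (simp add: nabla0_eq_nabla_ab)

lemma torsion_nabla0: "\<omega> \<in> Omega 1 \<Longrightarrow> torsion nabla0 \<omega> = zero_form"
  by (auto elim!: Omega_1E
      simp: torsion_def d1_def theta_eq_form1 nabla0_eq_nabla_ab zero_form_eq_form2 algebra_simps)

lemma curvature_nabla0: "\<omega> \<in> Omega 1 \<Longrightarrow> curvature nabla0 \<omega> = zero_form"
  by (auto elim!: Omega_1E simp: curvature_def paths_2 d1_def theta_eq_form1 nabla0_eq_nabla_ab
      zero_form_eq_form3 form3_def algebra_simps)

lemma bimod_conn_bij_iff:
  "(bimod_conn N \<sigma> \<and> bij_betw \<sigma> (Omega 2) (Omega 2)) \<longleftrightarrow>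
    (\<forall>\<omega>\<in>Omega 1. N \<omega> = nabla0 \<omega>) \<and> (\<forall>\<rho>\<in>Omega 2. \<sigma> \<rho> = \<rho>)"
proof
  assume conn_bij: "bimod_conn N \<sigma> \<and> bij_betw \<sigma> (Omega 2) (Omega 2)"
  then obtain a b where N: "\<forall>\<omega>\<in>Omega 1. N \<omega> = nabla_ab a b \<omega>"
    and \<sigma>: "\<forall>\<rho>\<in>Omega 2. \<sigma> \<rho> = sigma_ab a b \<rho>"
    using bimod_conn_paramsE by blast
  have "bij_betw (sigma_ab a b) (Omega 2) (Omega 2)"
    using conn_bij \<sigma> bij_betw_cong[of "Omega 2" \<sigma> "sigma_ab a b"] by simp
  then have "a = 1" "b = 1"
    by (simp_all add: bij_betw_sigma_ab_iff)
  with N \<sigma> show "(\<forall>\<omega>\<in>Omega 1. N \<omega> = nabla0 \<omega>) \<and> (\<forall>\<rho>\<in>Omega 2. \<sigma> \<rho> = \<rho>)"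
    by (simp add: nabla0_eq_nabla_ab sigma_ab_1_1)
next
  assume "(\<forall>\<omega>\<in>Omega 1. N \<omega> = nabla0 \<omega>) \<and> (\<forall>\<rho>\<in>Omega 2. \<sigma> \<rho> = \<rho>)"
  then have N: "\<forall>\<omega>\<in>Omega 1. N \<omega> = nabla0 \<omega>" and \<sigma>: "\<forall>\<rho>\<in>Omega 2. \<sigma> \<rho> = \<rho>"
    by simp_all
  then have "bimod_conn N \<sigma>"
    unfolding bimod_conn_iff_params
    by (auto simp: nabla0_eq_nabla_ab sigma_ab_1_1 intro!: exI[of _ 1])
  moreover have "bij_betw \<sigma> (Omega 2) (Omega 2)"
    using \<sigma> bij_betw_cong[of "Omega 2" \<sigma> id] by simp
  ultimately show "bimod_conn N \<sigma> \<and> bij_betw \<sigma> (Omega 2) (Omega 2)" ..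
qed

lemma bimod_conn_metric_compat_iff:
  assumes "bimod_conn N \<sigma>"
  shows "metric_compat N \<sigma> \<longleftrightarrow> (\<forall>\<omega>\<in>Omega 1. N \<omega> = nabla0 \<omega>)"
proof -
  obtain a b where N: "\<forall>\<omega>\<in>Omega 1. N \<omega> = nabla_ab a b \<omega>"
    and \<sigma>: "\<forall>\<rho>\<in>Omega 2. \<sigma> \<rho> = sigma_ab a b \<rho>"
    using assms by (rule bimod_conn_paramsE)
  have "metric_compat N \<sigma> \<longleftrightarrow> metric_compat (nabla_ab a b) (sigma_ab a b)"
    using N \<sigma> by (rule metric_compat_cong)
  also have "\<dots> \<longleftrightarrow> a = 1 \<and> b = 1"
    by (rule metric_compat_nabla_ab_iff)
  also have "\<dots> \<longleftrightarrow> (\<forall>\<omega>\<in>Omega 1. nabla_ab a b \<omega> = nabla0 \<omega>)"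
    by (rule nabla_ab_eq_nabla0_iff[symmetric])
  also have "\<dots> \<longleftrightarrow> (\<forall>\<omega>\<in>Omega 1. N \<omega> = nabla0 \<omega>)"
    using N by simp
  finally show ?thesis .
qed

theorem lemma4p1:
  shows "(\<forall>N \<sigma>. (bimod_conn N \<sigma> \<and> bij_betw \<sigma> (Omega 2) (Omega 2)) \<longleftrightarrow>
            ((\<forall>\<omega>\<in>Omega 1. N \<omega> = nabla0 \<omega>) \<and> (\<forall>\<rho>\<in>Omega 2. \<sigma> \<rho> = \<rho>)))
       \<and> (\<forall>N \<sigma>. bimod_conn N \<sigma> \<longrightarrow>
            (metric_compat N \<sigma> \<longleftrightarrow> (\<forall>\<omega>\<in>Omega 1. N \<omega> = nabla0 \<omega>)))
       \<and> (\<forall>\<omega>\<in>Omega 1. torsion nabla0 \<omega> = zero_form)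
       \<and> (\<forall>\<omega>\<in>Omega 1. curvature nabla0 \<omega> = zero_form)"
  using bimod_conn_bij_iff bimod_conn_metric_compat_iff torsion_nabla0 curvature_nabla0
  by blast

end
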